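(* Let $\alpha\in\mathbb{F}_q^*$ and let $\mu\in\mathbb{F}_q[X]\cap\mathbb{F}[X]^0$ be of degree $d$. (a) Suppose $\mu=\mu^{*\alpha}$. If $\zeta^2\ne\alpha$ for every root $\zeta\in\mathbb{F}$ of $\mu$, then $d=2e$ is even and the product of the roots of $\mu$ equals $\alpha^e$. If $\mu=\mu^{*\alpha}$ and $\mu$ is irreducible in $\mathbb{F}_q[X]$, then one of the following occurs: (I) there is $\zeta\in\mathbb{F}_q$ with $\alpha=\zeta^2$, $\mu=X-\zeta$ and $\mu'=X+\zeta$; (II) there is $\zeta\in\mathbb{F}_{q^2}\setminus\mathbb{F}_q$ with $\alpha=\zeta^2$ and $\mu=X^2-\alpha=\mu'$; (III) there is $\zeta\in\mathbb{F}_{q^2}\setminus\mathbb{F}_q$ with $\alpha=-\zeta^2$ and $\mu=X^2+\alpha=\mu'$; (IV) for all roots $\zeta\in\mathbb{F}$ of $\mu$ we have $\alpha\ne\pm\zeta^2$; in this case $d=2e$ is even, $\zeta^{q^e}=\alpha\zeta^{-1}$ for each root $\zeta$, and $\mu\ne\mu'$ if $q$ is odd. Cases (II) and (III) only occur if $q$ is odd. (b) If $\mu$ is irreducible, $d$ and $q$ are odd, and $\mu'=\mu^{*\alpha}$, then $-\alpha$ is a square in $\mathbb{F}_q$.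
   Context: $\mathbb{F}$ is an algebraic closure of $\mathbb{F}_p$ and $q$ is a power of $p$. $\mathbb{F}[X]^0$ is the set of monic separable polynomials over $\mathbb{F}$ with non-zero constant coefficient. For $\mu\in\mathbb{F}[X]^0$: $\mu'$ is the element of $\mathbb{F}[X]^0$ whose roots are the negatives of the roots of $\mu$; $\mu^{*\alpha}$ is the element of $\mathbb{F}[X]^0$ whose roots are $\alpha\zeta^{-1}$ for the roots $\zeta$ of $\mu$. *)

theory Defs
  imports "HOL-Computational_Algebra.Computational_Algebra"
begin

text \<open>The field F: an algebraic closure of F_p (type 'a of characteristic p,
algebraically closed, and algebraic over F_p, i.e. every element lies in some
finite subfield F_{p^k}).\<close>
definition alg_closure_of_Fp :: "('a::field) itself \<Rightarrow> nat \<Rightarrow> bool" where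
  "alg_closure_of_Fp (T :: 'a itself) p \<longleftrightarrow>
     prime p \<and> CHAR('a) = p \<and>
     (\<forall>f :: 'a poly. degree f > 0 \<longrightarrow> (\<exists>x. poly f x = 0)) \<and>
     (\<forall>x :: 'a. \<exists>k>0. x ^ (p ^ k) = x)"

text \<open>The subfield F_q of F (q a power of the characteristic).\<close>
definition Fq :: "nat \<Rightarrow> 'a::field set" where
  "Fq q = {x. x ^ q = x}"

definition poly_over :: "nat \<Rightarrow> 'a::field poly \<Rightarrow> bool" where
  "poly_over q f \<longleftrightarrow> (\<forall>i. coeff f i \<in> Fq q)"

definition separable_poly :: "'a::field poly \<Rightarrow> bool" where
  "separable_poly f \<longleftrightarrow> coprime f (pderiv f)"

definition FX0 :: "'a::field poly set" where
  "FX0 = {f. lead_coeff f = 1 \<and> separable_poly f \<and> coeff f 0 \<noteq> 0}"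

definition roots :: "'a::field poly \<Rightarrow> 'a set" where
  "roots f = {x. poly f x = 0}"

definition mu_neg :: "'a::field poly \<Rightarrow> 'a poly" where
  "mu_neg f = (\<Prod>z\<in>roots f. [:z, 1:])"

definition mu_star :: "'a::field \<Rightarrow> 'a poly \<Rightarrow> 'a poly" where
  "mu_star a f = (\<Prod>z\<in>roots f. [:- (a / z), 1:])"

definition irreducible_over :: "nat \<Rightarrow> 'a::field poly \<Rightarrow> bool" where
  "irreducible_over q f \<longleftrightarrow> poly_over q f \<and> degree f > 0 \<and>
     (\<forall>g h. poly_over q g \<longrightarrow> poly_over q h \<longrightarrow> f = g * h \<longrightarrow>
        degree g = 0 \<or> degree h = 0)"

end

theory Submission
  imports Defs
begin

text \<open>
  Because \<open>\<mu>\<close> is separable and \<open>F\<close> is algebraically closed, \<open>\<mu>\<close> is the product of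
  \<open>X - \<zeta>\<close> over its roots, so \<open>\<mu> = \<mu>\<^sup>*\<^sup>\<alpha>\<close> says that \<open>\<zeta> \<mapsto> \<alpha>/\<zeta>\<close> permutes the roots;
  without fixed points the roots fall into pairs \<open>{\<zeta>, \<alpha>/\<zeta>}\<close> with product \<open>\<alpha>\<close>.

  If \<open>\<mu>\<close> is irreducible over \<open>F_q\<close>, the product of \<open>X - \<zeta>\<close> over a Frobenius orbit
  is defined over \<open>F_q\<close> and divides \<open>\<mu>\<close>, so the roots are \<open>\<zeta>^(q^i)\<close> for \<open>i < d\<close>,
  and \<open>\<zeta>^(q^j) = \<zeta>\<close> iff \<open>d dvd j\<close>. Writing \<open>\<alpha>/\<zeta> = \<zeta>^(q^k)\<close> and applying the
  Frobenius \<open>k\<close> more times gives \<open>\<zeta>^(q^(2k)) = \<zeta>\<close>, hence \<open>d dvd 2k\<close>: either \<open>k = 0\<close>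
  and \<open>\<alpha> = \<zeta>\<^sup>2\<close>, or \<open>d = 2k\<close>. If \<open>\<zeta>\<^sup>2 = \<plusminus>\<alpha>\<close> lies in \<open>F_q\<close> then \<open>\<zeta>^q = \<plusminus>\<zeta>\<close>, so
  \<open>d \<le> 2\<close> and \<open>\<mu>\<close> is \<open>X - \<zeta>\<close> or \<open>X\<^sup>2 - \<zeta>\<^sup>2\<close> (cases I to III); otherwise we are in case IV. The same
  argument applied to \<open>-\<zeta>\<close> shows \<open>\<mu> \<noteq> \<mu>'\<close> in case IV, and applied to \<open>-\<alpha>/\<zeta>\<close> it
  proves (b), where \<open>d\<close> odd forces \<open>k = 0\<close>.
\<close>

lemma dvd_double_imp_eq:
  fixes k d :: nat
  assumes "0 < k" "k < d" "d dvd 2 * k"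
  shows "2 * k = d"
proof -
  obtain t where t: "2 * k = d * t" using assms(3) by (elim dvdE)
  then have "d * t < d * 2" using assms(2) by linarith
  then have "t < 2" by simp
  moreover have "t \<noteq> 0" using t assms(1) by (cases "t = 0") simp_all
  ultimately show ?thesis using t by (simp add: less_2_cases_iff)
qed

lemma char_power_minus:
  assumes "prime CHAR('a::comm_ring_1)" "m = CHAR('a) ^ k"
  shows "(- x :: 'a) ^ m = - (x ^ m)"
proof -
  have "m > 0" using assms prime_gt_0_nat by simp
  then have "0 = (x + - x) ^ m" by (simp add: power_0_left)
  also have "\<dots> = x ^ m + (- x) ^ m" by (rule freshmans_dream'[OF assms])
  finally show ?thesis by (simp add: eq_neg_iff_add_eq_0 add.commute)
qed

lemma char_power_inj:
  assumes "prime CHAR('a::idom)" "m = CHAR('a) ^ k" and "x ^ m = (y :: 'a) ^ m"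
  shows "x = y"
proof -
  have "(x - y) ^ m = x ^ m + (- y) ^ m"
    using freshmans_dream'[OF assms(1,2), of x "- y"] by simp
  also have "\<dots> = 0" using char_power_minus[OF assms(1,2)] assms(3) by simp
  finally show ?thesis by simp
qed

lemma finite_roots: "(f :: 'a::field poly) \<noteq> 0 \<Longrightarrow> finite (roots f)"
  unfolding roots_def by (rule poly_roots_finite)

lemma FX0_nonzero: "f \<in> FX0 \<Longrightarrow> f \<noteq> 0"
  by (auto simp: FX0_def)

lemma FX0_root_nonzero: "f \<in> FX0 \<Longrightarrow> z \<in> roots f \<Longrightarrow> z \<noteq> 0"
  unfolding FX0_def roots_def by (auto simp: poly_0_coeff_0)

lemma roots_mu_star: "finite (roots f) \<Longrightarrow> roots (mu_star a f) = (\<lambda>z. a / z) ` roots f"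
  unfolding mu_star_def roots_def[of "prod _ _"] by (auto simp: poly_prod prod_zero_iff)

lemma roots_mu_neg: "finite (roots f) \<Longrightarrow> roots (mu_neg f) = uminus ` roots f"
  unfolding mu_neg_def roots_def[of "prod _ _"] by (auto simp: poly_prod prod_zero_iff add_eq_0_iff)

lemma separable_poly_square_dvd_imp_unit:
  assumes "separable_poly (f :: 'a::field poly)" and "l * l dvd f"
  shows "is_unit l"
proof -
  from assms(2) obtain k where "f = l * l * k" by (elim dvdE)
  then have k: "f = l * (l * k)" by (simp only: mult.assoc)
  have "l dvd pderiv f"
    unfolding k pderiv_mult by (intro dvd_add) simp_all
  moreover have "l dvd f" unfolding k by simp
  ultimately show "is_unit l"
    using assms(1) coprime_common_divisor unfolding separable_poly_def by blast
qed

lemma prod_lin_dvd_if_roots: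
  assumes "finite S" "S \<subseteq> roots (f :: 'a::field poly)"
  shows "(\<Prod>r\<in>S. [:- r, 1:]) dvd f"
  using assms
proof (induction S rule: finite_induct)
  case (insert a S)
  then obtain g where g: "f = (\<Prod>r\<in>S. [:- r, 1:]) * g" by (auto elim: dvdE)
  have "poly (\<Prod>r\<in>S. [:- r, 1:]) a \<noteq> 0" using insert by (auto simp: poly_prod)
  moreover have "poly f a = 0" using insert by (auto simp: roots_def)
  ultimately have "[:- a, 1:] dvd g" using g by (simp add: poly_eq_0_iff_dvd)
  then have "[:- a, 1:] * (\<Prod>r\<in>S. [:- r, 1:]) dvd g * (\<Prod>r\<in>S. [:- r, 1:])"
    by (rule mult_dvd_mono) simp
  then show ?case by (simp only: prod.insert[OF insert(1,2)] g mult.commute)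
qed simp

lemma FX0_eq_prod_roots:
  fixes f :: "'a::field poly"
  assumes alg_closed: "\<And>g :: 'a poly. degree g > 0 \<Longrightarrow> \<exists>x. poly g x = 0" and "f \<in> FX0"
  shows "f = (\<Prod>r\<in>roots f. [:- r, 1:])"
proof -
  define P where "P = (\<Prod>r\<in>roots f. [:- r, 1:])"
  have fin: "finite (roots f)" using assms(2) by (intro finite_roots FX0_nonzero)
  then obtain h where h: "f = P * h"
    unfolding P_def using prod_lin_dvd_if_roots by blast
  have "degree h = 0"
  proof (rule ccontr)
    assume "degree h \<noteq> 0"
    then obtain r where r: "poly h r = 0" using alg_closed by auto
    then have "r \<in> roots f" using h by (simp add: roots_def)
    then have "[:- r, 1:] dvd P" unfolding P_def using fin by (intro dvd_prodI)
    moreover have "[:- r, 1:] dvd h" using r by (simp add: poly_eq_0_iff_dvd)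
    ultimately have "[:- r, 1:] * [:- r, 1:] dvd f" unfolding h by (rule mult_dvd_mono)
    moreover have "separable_poly f" using assms(2) by (simp add: FX0_def)
    ultimately have "is_unit [:- r, 1:]" by (simp add: separable_poly_square_dvd_imp_unit)
    then show False by (simp add: is_unit_iff_degree)
  qed
  then obtain c where c: "h = [:c:]" by (elim degree_eq_zeroE)
  have "lead_coeff P = 1" unfolding P_def by (simp add: lead_coeff_prod)
  moreover have "lead_coeff f = 1" using assms(2) by (simp add: FX0_def)
  ultimately have "c = 1" unfolding h c by (cases "c = 0") (simp_all add: lead_coeff_mult)
  then show ?thesis unfolding P_def[symmetric] using h c by simp
qed

lemma degree_FX0_eq_card_roots:
  fixes f :: "'a::field poly"
  assumes "\<And>g :: 'a poly. degree g > 0 \<Longrightarrow> \<exists>x. poly g x = 0" and "f \<in> FX0"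
  shows "degree f = card (roots f)"
proof -
  have "degree f = degree (\<Prod>r\<in>roots f. [:- r, 1:])"
    by (rule arg_cong[OF FX0_eq_prod_roots[OF assms]])
  also have "\<dots> = card (roots f)" by (simp add: degree_prod_eq_sum_degree)
  finally show ?thesis .
qed

lemma div_closed_Diff_pair:
  fixes S :: "'a::field set"
  assumes "0 \<notin> S" "\<And>y. y \<in> S \<Longrightarrow> a / y \<in> S" and "y \<in> S - {z, a / z}"
  shows "a / y \<in> S - {z, a / z}"
proof -
  have "a / y \<in> S" "y \<noteq> 0" using assms by auto
  then have "a \<noteq> 0" using assms(1) by auto
  then show ?thesis using assms(3) \<open>a / y \<in> S\<close> \<open>y \<noteq> 0\<close> by (auto simp: field_simps)
qed

lemma div_closed_card_prod:
  fixes S :: "'a::field set"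
  assumes "finite S" "0 \<notin> S" "\<And>z. z \<in> S \<Longrightarrow> a / z \<in> S" "\<And>z. z \<in> S \<Longrightarrow> z ^ 2 \<noteq> a"
  shows "\<exists>e. card S = 2 * e \<and> \<Prod>S = a ^ e"
  using assms
proof (induction "card S" arbitrary: S rule: less_induct)
  case less
  show ?case
  proof (cases "S = {}")
    case False
    then obtain z where z: "z \<in> S" by blast
    define S' where "S' = S - {z, a / z}"
    have "z \<noteq> 0" using z less.prems(2) by auto
    have "a / z \<noteq> z"
      using less.prems(4)[OF z] \<open>z \<noteq> 0\<close> by (auto simp: field_simps power2_eq_square)
    have "a / z \<in> S" using less.prems(3)[OF z] .
    moreover have "card {z, a / z} \<le> card S"
      using z \<open>a / z \<in> S\<close> less.prems(1) by (intro card_mono) auto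
    ultimately have card: "card S = card S' + 2"
      using z \<open>a / z \<noteq> z\<close> less.prems(1) unfolding S'_def by (simp add: card_Diff_subset)
    have prod: "\<Prod>S = z * (a / z) * \<Prod>S'"
      using z \<open>a / z \<in> S\<close> \<open>a / z \<noteq> z\<close> less.prems(1)
      by (simp add: S'_def prod.remove flip: Diff_insert2 mult.assoc)
    obtain e where "card S' = 2 * e" "\<Prod>S' = a ^ e"
      using less.hyps[of S'] less.prems div_closed_Diff_pair[of S a _ z] card
      unfolding S'_def by auto
    then show ?thesis
      using card prod \<open>z \<noteq> 0\<close> by (intro exI[of _ "Suc e"]) simp
  qed simp
qed

lemma self_reciprocal_div_root:
  assumes "f \<in> FX0" "f = mu_star a f" "w \<in> roots f"
  shows "a / w \<in> roots f"
proof -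
  have "roots f = roots (mu_star a f)" using assms(2) by (rule arg_cong)
  also have "\<dots> = (\<lambda>z. a / z) ` roots f" by (rule roots_mu_star[OF finite_roots[OF FX0_nonzero[OF assms(1)]]])
  finally have roots_eq: "roots f = (\<lambda>z. a / z) ` roots f" .
  have "a / w \<in> (\<lambda>z. a / z) ` roots f" using assms(3) by (rule imageI)
  then show ?thesis by (simp only: roots_eq[symmetric])
qed

lemma self_reciprocal_prod_roots:
  fixes f :: "'a::field poly"
  assumes alg_closed: "\<And>g :: 'a poly. degree g > 0 \<Longrightarrow> \<exists>x. poly g x = 0"
    and "f \<in> FX0" "f = mu_star a f" "\<And>z. z \<in> roots f \<Longrightarrow> z ^ 2 \<noteq> a"
  shows "\<exists>e. degree f = 2 * e \<and> (\<Prod>z\<in>roots f. z) = a ^ e"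
  using div_closed_card_prod[of "roots f" a] degree_FX0_eq_card_roots[OF alg_closed assms(2)]
    finite_roots[OF FX0_nonzero[OF assms(2)]] FX0_root_nonzero[OF assms(2)]
    self_reciprocal_div_root[OF assms(2,3)] assms(4)
  by auto

context
  fixes q n :: nat
  assumes prime_CHAR: "prime CHAR('a::field)" and q_eq: "q = CHAR('a) ^ n"
begin

lemma q_pos: "q > 0"
  using prime_gt_0_nat[OF prime_CHAR] by (simp add: q_eq)

lemma q_power_eq: "q ^ i = CHAR('a) ^ (n * i)"
  by (simp add: q_eq power_mult)

lemma power_q_minus: "(- x :: 'a) ^ (q ^ i) = - (x ^ (q ^ i))"
  by (rule char_power_minus[OF prime_CHAR q_power_eq])

lemma power_q_inj: "(x :: 'a) ^ (q ^ i) = y ^ (q ^ i) \<Longrightarrow> x = y"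
  by (rule char_power_inj[OF prime_CHAR q_power_eq])

lemma inj_power_q: "inj (\<lambda>x :: 'a. x ^ q)"
  using power_q_inj[where i = 1] by (auto intro: injI)

lemma power_q_Suc: "(x :: 'a) ^ (q ^ Suc i) = (x ^ (q ^ i)) ^ q"
  by (simp only: power_Suc2 power_mult)

lemma power_q_add_exp: "(x :: 'a) ^ (q ^ (i + j)) = (x ^ (q ^ i)) ^ (q ^ j)"
  by (simp add: power_add power_mult)

lemma Fq_power_q: "(a :: 'a) \<in> Fq q \<Longrightarrow> a ^ (q ^ i) = a"
  unfolding Fq_def by (induction i) (auto simp: power_mult mult.commute[of q])

lemma Fq_uminus: "(a :: 'a) \<in> Fq q \<Longrightarrow> - a \<in> Fq q"
  using power_q_minus[of a 1] by (simp add: Fq_def)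

lemma poly_power_q:
  fixes f :: "'a poly"
  assumes "poly_over q f"
  shows "poly f (x ^ (q ^ i)) = poly f x ^ (q ^ i)"
proof -
  have "poly f x ^ (q ^ i) = (\<Sum>k\<le>degree f. (coeff f k * x ^ k) ^ (q ^ i))"
    unfolding poly_altdef by (rule freshmans_dream_sum'[OF prime_CHAR q_power_eq, of "\<lambda>k. coeff f k * x ^ k"])
  also have "\<dots> = (\<Sum>k\<le>degree f. coeff f k * (x ^ (q ^ i)) ^ k)"
    using assms by (simp add: poly_over_def Fq_power_q power_mult_distrib flip: power_mult)
      (simp add: mult.commute)
  finally show ?thesis by (simp add: poly_altdef)
qed

lemma map_poly_power_q_mult:
  "map_poly (\<lambda>c::'a. c ^ q) (f * g) = map_poly (\<lambda>c. c ^ q) f * map_poly (\<lambda>c. c ^ q) g"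
proof (rule poly_eqI)
  fix k
  have "(\<Sum>i\<le>k. coeff f i * coeff g (k - i)) ^ q = (\<Sum>i\<le>k. (coeff f i * coeff g (k - i)) ^ q)"
    by (rule freshmans_dream_sum'[OF prime_CHAR q_eq])
  then show "coeff (map_poly (\<lambda>c. c ^ q) (f * g)) k
      = coeff (map_poly (\<lambda>c. c ^ q) f * map_poly (\<lambda>c. c ^ q) g) k"
    using q_pos by (simp add: coeff_map_poly coeff_mult power_mult_distrib power_0_left)
qed

lemma even_q_iff_CHAR_2:
  assumes "n \<ge> 1"
  shows "even q \<longleftrightarrow> CHAR('a) = 2"
proof -
  have "even q \<longleftrightarrow> even CHAR('a)" using assms by (simp add: q_eq)
  also have "\<dots> \<longleftrightarrow> CHAR('a) = 2" using prime_CHAR unfolding prime_nat_iff by force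
  finally show ?thesis .
qed

lemma odd_q_if_sqrt_not_in_Fq:
  assumes "n \<ge> 1" and "(z :: 'a) \<notin> Fq q" "z ^ 2 \<in> Fq q"
  shows "odd q"
proof
  assume "even q"
  then have "CHAR('a) = 2" using even_q_iff_CHAR_2[OF assms(1)] by simp
  have "(z ^ q) ^ 2 = (z ^ 2) ^ q" by (simp flip: power_mult add: mult.commute)
  also have "\<dots> = z ^ 2" using assms(3) by (simp add: Fq_def)
  finally have "z ^ q = z \<or> z ^ q = - z" by (simp add: power2_eq_iff)
  then show False
    using assms(2) uminus_CHAR_2[OF \<open>CHAR('a) = 2\<close>, of z] by (auto simp: Fq_def)
qed

lemma poly_over_iff_map_poly_power_q:
  "poly_over q (f :: 'a poly) \<longleftrightarrow> map_poly (\<lambda>c. c ^ q) f = f"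
  using q_pos by (auto simp: poly_over_def Fq_def poly_eq_iff coeff_map_poly power_0_left)

lemma poly_over_prod_lin:
  fixes S :: "'a set"
  assumes "finite S" and "(\<lambda>w. w ^ q) ` S \<subseteq> S"
  shows "poly_over q (\<Prod>r\<in>S. [:- r, 1:])"
proof -
  have "map_poly (\<lambda>c. c ^ q) (\<Prod>r\<in>S. [:- r, 1:]) = (\<Prod>r\<in>S. [:- (r ^ q), 1:])"
    using \<open>finite S\<close>
  proof induction
    case (insert r S)
    have "map_poly (\<lambda>c. c ^ q) [:- r, 1:] = [:- (r ^ q), 1:]"
      using q_pos power_q_minus[where i = 1] by (simp add: map_poly_pCons power_0_left)
    then show ?case
      by (simp only: prod.insert[OF insert(1,2)] map_poly_power_q_mult insert.IH)
  qed simp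
  also have "\<dots> = (\<Prod>r\<in>(\<lambda>w. w ^ q) ` S. [:- r, 1:])"
    using inj_power_q by (simp add: prod.reindex inj_on_subset)
  also have "(\<lambda>w. w ^ q) ` S = S"
    using assms inj_on_subset[OF inj_power_q subset_UNIV] by (intro endo_inj_surj)
  finally show ?thesis by (simp add: poly_over_iff_map_poly_power_q)
qed

lemma power_q_period_mult: "(z :: 'a) ^ (q ^ k) = z \<Longrightarrow> z ^ (q ^ (k * t)) = z"
  by (induction t) (simp_all add: power_q_add_exp)

lemma power_q_period_mod: "(z :: 'a) ^ (q ^ k) = z \<Longrightarrow> z ^ (q ^ j) = z ^ (q ^ (j mod k))"
  using power_q_add_exp[of z "k * (j div k)" "j mod k"] power_q_period_mult[of z k "j div k"]
  by simp

lemma frob_orbit_periodic: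
  assumes "finite (range (\<lambda>i. (z :: 'a) ^ (q ^ i)))"
  obtains k where "k > 0" "z ^ (q ^ k) = z"
proof -
  have "\<not> inj (\<lambda>i. z ^ (q ^ i))"
    using assms finite_imageD infinite_UNIV_nat by blast
  then obtain i j where "i < j" "z ^ (q ^ i) = z ^ (q ^ j)"
    unfolding inj_def by (metis linorder_neqE_nat)
  then have "(z ^ (q ^ (j - i))) ^ (q ^ i) = z ^ (q ^ i)"
    using power_q_add_exp[of z "j - i" i] by simp
  then have "z ^ (q ^ (j - i)) = z" by (rule power_q_inj)
  with \<open>i < j\<close> show thesis by (intro that[of "j - i"]) simp_all
qed

lemma frob_orbit_card:
  fixes z :: 'a
  defines "orb \<equiv> range (\<lambda>i. z ^ (q ^ i))"
  assumes "finite orb"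
  shows frob_orbit_card_dvd_iff: "z ^ (q ^ j) = z \<longleftrightarrow> card orb dvd j"
    and frob_orbit_eq_image: "orb = (\<lambda>i. z ^ (q ^ i)) ` {..<card orb}"
proof -
  define m where "m = (LEAST k. 0 < k \<and> z ^ (q ^ k) = z)"
  obtain k where "0 < k" "z ^ (q ^ k) = z"
    using frob_orbit_periodic assms(2) unfolding orb_def by blast
  then have m: "0 < m" "z ^ (q ^ m) = z"
    using LeastI[of "\<lambda>k. 0 < k \<and> z ^ (q ^ k) = z" k] unfolding m_def by simp_all
  have minimal: "z ^ (q ^ k) \<noteq> z" if "0 < k" "k < m" for k
    using not_less_Least[of k] that unfolding m_def by blast
  have dvd_iff: "z ^ (q ^ j) = z \<longleftrightarrow> m dvd j" for j
    using power_q_period_mod[OF m(2), of j] power_q_period_mult[OF m(2)] minimal[of "j mod m"] m(1)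
    by (auto simp: dvd_eq_mod_eq_0)
  have image: "orb = (\<lambda>i. z ^ (q ^ i)) ` {..<m}"
    unfolding orb_def using power_q_period_mod[OF m(2)] m(1)
    by (auto intro!: image_eqI[where x = "_ mod m"])
  have "inj_on (\<lambda>i. z ^ (q ^ i)) {..<m}"
  proof (rule linorder_inj_onI')
    fix i j assume "i \<in> {..<m}" "j \<in> {..<m}" "i < j"
    show "z ^ (q ^ i) \<noteq> z ^ (q ^ j)"
    proof
      assume "z ^ (q ^ i) = z ^ (q ^ j)"
      then have "(z ^ (q ^ (j - i))) ^ (q ^ i) = z ^ (q ^ i)"
        using power_q_add_exp[of z "j - i" i] \<open>i < j\<close> by simp
      then have "z ^ (q ^ (j - i)) = z" by (rule power_q_inj)
      moreover have "j - i < m" using \<open>j \<in> {..<m}\<close> by auto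
      ultimately show False using minimal[of "j - i"] \<open>i < j\<close> by simp
    qed
  qed
  then have "card orb = m" by (simp add: image card_image)
  then show "z ^ (q ^ j) = z \<longleftrightarrow> card orb dvd j" and "orb = (\<lambda>i. z ^ (q ^ i)) ` {..<card orb}"
    using dvd_iff image by simp_all
qed

context
  assumes alg_closed: "\<And>g :: 'a::field poly. degree g > 0 \<Longrightarrow> \<exists>x. poly g x = 0"
begin

lemma irreducible_obtain_root:
  fixes \<mu> :: "'a poly"
  assumes "irreducible_over q \<mu>"
  obtains z where "z \<in> roots \<mu>"
  using alg_closed[of \<mu>] assms by (auto simp: irreducible_over_def roots_def)

lemma irreducible_roots_eq_frob_orbit:
  fixes \<mu> :: "'a poly"
  assumes \<mu>: "\<mu> \<in> FX0" "irreducible_over q \<mu>" and z: "z \<in> roots \<mu>"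
  shows "roots \<mu> = range (\<lambda>i. z ^ (q ^ i))"
proof -
  define orb where "orb = range (\<lambda>i. z ^ (q ^ i))"
  have fin: "finite (roots \<mu>)" using \<mu>(1) by (intro finite_roots FX0_nonzero)
  have over: "poly_over q \<mu>" using \<mu>(2) by (simp add: irreducible_over_def)
  have frob_roots: "(\<lambda>w. w ^ q) ` roots \<mu> = roots \<mu>"
    using poly_power_q[OF over, where i = 1] fin inj_on_subset[OF inj_power_q subset_UNIV]
    by (intro endo_inj_surj) (auto simp: roots_def q_pos power_0_left)
  have orb_roots: "orb \<subseteq> roots \<mu>"
    using z poly_power_q[OF over] q_pos by (auto simp: orb_def roots_def)
  then have "finite orb" using fin by (rule finite_subset)
  moreover have "(\<lambda>w. w ^ q) ` orb \<subseteq> orb"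
    unfolding orb_def by (auto simp only: power_q_Suc[symmetric] intro: rangeI)
  ultimately have frob_orb: "(\<lambda>w. w ^ q) ` orb = orb"
    using inj_on_subset[OF inj_power_q subset_UNIV] by (intro endo_inj_surj)
  define g where "g = (\<Prod>r\<in>orb. [:- r, 1:])"
  define h where "h = (\<Prod>r\<in>roots \<mu> - orb. [:- r, 1:])"
  have "\<mu> = (\<Prod>r\<in>roots \<mu>. [:- r, 1:])" by (rule FX0_eq_prod_roots[OF alg_closed \<mu>(1)])
  also have "\<dots> = h * g" unfolding g_def h_def by (rule prod.subset_diff[OF orb_roots fin])
  finally have split: "\<mu> = g * h" by (simp only: mult.commute)
  have "(\<lambda>w. w ^ q) ` (roots \<mu> - orb) = roots \<mu> - orb"
    by (simp only: image_set_diff[OF inj_power_q] frob_roots frob_orb)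
  then have over_h: "poly_over q h"
    unfolding h_def using fin by (intro poly_over_prod_lin) simp_all
  have over_g: "poly_over q g"
    unfolding g_def using \<open>finite orb\<close> frob_orb by (intro poly_over_prod_lin) simp_all
  have "degree g = 0 \<or> degree h = 0"
    using \<mu>(2) over_g over_h split unfolding irreducible_over_def by (elim conjE allE impE)
  moreover have "degree g = card orb" "degree h = card (roots \<mu> - orb)"
    unfolding g_def h_def by (simp_all add: degree_prod_eq_sum_degree)
  moreover have "card orb \<noteq> 0" using \<open>finite orb\<close> by (auto simp: orb_def)
  ultimately have "card (roots \<mu> - orb) = 0" by simp
  then have "roots \<mu> \<subseteq> orb" using fin by simp
  then show ?thesis using orb_roots unfolding orb_def by (rule subset_antisym)
qed

lemma irreducible_frob_period:
  fixes \<mu> :: "'a poly"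
  assumes "\<mu> \<in> FX0" "irreducible_over q \<mu>" "z \<in> roots \<mu>"
  shows irreducible_frob_fixed_iff: "z ^ (q ^ j) = z \<longleftrightarrow> degree \<mu> dvd j"
    and irreducible_roots_eq_image: "roots \<mu> = (\<lambda>i. z ^ (q ^ i)) ` {..<degree \<mu>}"
proof -
  have "finite (range (\<lambda>i. z ^ (q ^ i)))" and "degree \<mu> = card (range (\<lambda>i. z ^ (q ^ i)))"
    using irreducible_roots_eq_frob_orbit[OF assms] degree_FX0_eq_card_roots[OF alg_closed assms(1)]
      finite_roots[OF FX0_nonzero[OF assms(1)]] by simp_all
  then show "z ^ (q ^ j) = z \<longleftrightarrow> degree \<mu> dvd j"
    and "roots \<mu> = (\<lambda>i. z ^ (q ^ i)) ` {..<degree \<mu>}"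
    using frob_orbit_card_dvd_iff[of z j] frob_orbit_eq_image[of z]
      irreducible_roots_eq_frob_orbit[OF assms] by simp_all
qed

lemma irreducible_quotient_root_exponent:
  fixes \<mu> :: "'a poly"
  assumes \<mu>: "\<mu> \<in> FX0" "irreducible_over q \<mu>" and w: "w \<in> roots \<mu>"
    and c: "c \<in> Fq q" "c \<noteq> 0" and cw: "c / w \<in> roots \<mu>"
  obtains k where "k < degree \<mu>" "c / w = w ^ (q ^ k)" "degree \<mu> dvd 2 * k"
proof -
  obtain k where k: "k < degree \<mu>" "c / w = w ^ (q ^ k)"
    using irreducible_roots_eq_image[OF \<mu> w] cw by auto
  have "w ^ (q ^ (k + k)) = (c / w) ^ (q ^ k)" using k(2) by (simp add: power_q_add_exp)
  also have "\<dots> = c / (c / w)" using Fq_power_q[OF c(1)] by (simp add: power_divide flip: k(2))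
  also have "\<dots> = w" using FX0_root_nonzero[OF \<mu>(1) w] c(2) by simp
  finally have "degree \<mu> dvd 2 * k" using irreducible_frob_fixed_iff[OF \<mu> w] by (simp add: mult_2)
  with k show thesis by (rule that)
qed

lemma irreducible_root_square_in_Fq:
  fixes \<mu> :: "'a poly"
  assumes \<mu>: "\<mu> \<in> FX0" "irreducible_over q \<mu>" and w: "w \<in> roots \<mu>" and w2: "w ^ 2 \<in> Fq q"
  shows "(roots \<mu> = {w} \<and> w \<in> Fq q \<and> \<mu> = [:- w, 1:] \<and> mu_neg \<mu> = [:w, 1:])
       \<or> (degree \<mu> = 2 \<and> w \<in> Fq (q ^ 2) - Fq q \<and> \<mu> = [:- (w ^ 2), 0, 1:] \<and> mu_neg \<mu> = \<mu>)"
proof -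
  note fixed_iff = irreducible_frob_fixed_iff[OF \<mu> w]
  note roots_eq = irreducible_roots_eq_image[OF \<mu> w]
  have split: "\<mu> = (\<Prod>r\<in>roots \<mu>. [:- r, 1:])" by (rule FX0_eq_prod_roots[OF alg_closed \<mu>(1)])
  have "(w ^ q) ^ 2 = (w ^ 2) ^ q" by (simp flip: power_mult add: mult.commute)
  then have "w ^ q = w \<or> w ^ q = - w" using w2 by (simp add: Fq_def power2_eq_iff)
  then consider (fixed) "w ^ q = w" | (negated) "w ^ q = - w" "w ^ q \<noteq> w" by blast
  then show ?thesis
  proof cases
    case fixed
    then have "degree \<mu> = 1" using fixed_iff[of 1] by simp
    then have "roots \<mu> = {w}" using roots_eq by (simp add: lessThan_Suc)
    then show ?thesis using fixed split by (simp add: Fq_def mu_neg_def)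
  next
    case negated
    have "w ^ (q ^ 2) = w" using negated power_q_minus[of w 1] by (simp add: power2_eq_square power_mult)
    then have "degree \<mu> dvd 2" using fixed_iff by blast
    moreover have "degree \<mu> \<noteq> 1" using fixed_iff[of 1] negated by auto
    moreover have "degree \<mu> \<noteq> 0" using \<mu>(2) by (simp add: irreducible_over_def)
    ultimately have deg: "degree \<mu> = 2" using dvd_imp_le[of "degree \<mu>" 2] by linarith
    have "w \<noteq> - w" using negated by auto
    moreover have "roots \<mu> = {w, - w}"
      using roots_eq deg negated by (simp add: numeral_2_eq_2 lessThan_Suc insert_commute)
    ultimately have "\<mu> = [:- (w ^ 2), 0, 1:]" and "mu_neg \<mu> = [:- (w ^ 2), 0, 1:]"
      using split by (simp_all add: mu_neg_def power2_eq_square)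
    moreover have "w \<in> Fq (q ^ 2) - Fq q"
      using \<open>w ^ (q ^ 2) = w\<close> negated by (simp add: Fq_def)
    ultimately show ?thesis using deg by simp
  qed
qed

lemma irreducible_self_reciprocal_half_degree:
  fixes \<mu> :: "'a poly"
  assumes \<mu>: "\<mu> \<in> FX0" "irreducible_over q \<mu>" and \<alpha>: "\<alpha> \<in> Fq q" "\<alpha> \<noteq> 0"
    and closed: "\<And>w. w \<in> roots \<mu> \<Longrightarrow> \<alpha> / w \<in> roots \<mu>"
    and no_sqrt: "\<And>w. w \<in> roots \<mu> \<Longrightarrow> \<alpha> \<noteq> w ^ 2"
  shows "even (degree \<mu>)" and "\<And>z. z \<in> roots \<mu> \<Longrightarrow> z ^ (q ^ (degree \<mu> div 2)) = \<alpha> / z"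
proof -
  have half: "even (degree \<mu>) \<and> w ^ (q ^ (degree \<mu> div 2)) = \<alpha> / w"
    if w: "w \<in> roots \<mu>" for w
  proof -
    obtain k where k: "k < degree \<mu>" "\<alpha> / w = w ^ (q ^ k)" "degree \<mu> dvd 2 * k"
      using irreducible_quotient_root_exponent[OF \<mu> w \<alpha> closed[OF w]] .
    have "k \<noteq> 0"
    proof
      assume "k = 0"
      then have "\<alpha> = w ^ 2"
        using k(2) FX0_root_nonzero[OF \<mu>(1) w] by (simp add: field_simps power2_eq_square)
      then show False using no_sqrt[OF w] by simp
    qed
    then have "2 * k = degree \<mu>" using k dvd_double_imp_eq[of k "degree \<mu>"] by simp
    then show ?thesis using k(2) by (auto simp flip: \<open>2 * k = degree \<mu>\<close>)
  qed
  obtain z0 where "z0 \<in> roots \<mu>" using irreducible_obtain_root[OF \<mu>(2)] .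
  then show "even (degree \<mu>)" using half by blast
  show "z ^ (q ^ (degree \<mu> div 2)) = \<alpha> / z" if "z \<in> roots \<mu>" for z
    using half[OF that] by auto
qed

lemma irreducible_self_reciprocal_ne_mu_neg:
  fixes \<mu> :: "'a poly"
  assumes \<mu>: "\<mu> \<in> FX0" "irreducible_over q \<mu>" and \<alpha>: "\<alpha> \<in> Fq q" "\<alpha> \<noteq> 0"
    and closed: "\<And>w. w \<in> roots \<mu> \<Longrightarrow> \<alpha> / w \<in> roots \<mu>"
    and no_sqrt: "\<And>w. w \<in> roots \<mu> \<Longrightarrow> \<alpha> \<noteq> w ^ 2 \<and> \<alpha> \<noteq> - (w ^ 2)"
    and CHAR: "CHAR('a) \<noteq> 2"
  shows "\<mu> \<noteq> mu_neg \<mu>"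
proof
  assume \<mu>_neg: "\<mu> = mu_neg \<mu>"
  obtain z where z: "z \<in> roots \<mu>" using irreducible_obtain_root[OF \<mu>(2)] .
  have "z \<noteq> 0" using FX0_root_nonzero[OF \<mu>(1) z] .
  have "- z \<in> roots \<mu>"
    using z roots_mu_neg[OF finite_roots[OF FX0_nonzero[OF \<mu>(1)]]] \<mu>_neg by auto
  then obtain j where j: "j < degree \<mu>" "- z = z ^ (q ^ j)"
    using irreducible_roots_eq_image[OF \<mu> z] by auto
  have "z ^ (q ^ (j + j)) = (- z) ^ (q ^ j)" by (simp only: power_q_add_exp j(2)[symmetric])
  also have "\<dots> = z" by (simp only: power_q_minus j(2)[symmetric] minus_minus)
  finally have "degree \<mu> dvd 2 * j" using irreducible_frob_fixed_iff[OF \<mu> z] by (simp add: mult_2)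
  show False
  proof (cases "j = 0")
    case True
    then have "- z = z" using j(2) by (simp only: power_0 power_one_right)
    then have "(2 :: 'a) * z = 0" by (metis add.right_inverse mult_2)
    then have "of_nat 2 = (0 :: 'a)" using \<open>z \<noteq> 0\<close> by simp
    then have "CHAR('a) dvd 2" by (simp only: of_nat_eq_0_iff_char_dvd)
    then show False using CHAR prime_CHAR primes_dvd_imp_eq[of "CHAR('a)" 2] by simp
  next
    case False
    then have "j = degree \<mu> div 2"
      using j(1) dvd_double_imp_eq[of j "degree \<mu>"] \<open>degree \<mu> dvd 2 * j\<close> by simp
    then have "- z = z ^ (q ^ (degree \<mu> div 2))" using j(2) by (simp only:)
    also have "\<dots> = \<alpha> / z"
      using irreducible_self_reciprocal_half_degree(2)[OF \<mu> \<alpha> closed _ z] no_sqrt by blast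
    finally have "\<alpha> = - (z ^ 2)" using \<open>z \<noteq> 0\<close> by (simp add: field_simps power2_eq_square)
    then show False using no_sqrt[OF z] by simp
  qed
qed

lemma mu_neg_eq_mu_star_odd_degree_square:
  fixes \<mu> :: "'a poly"
  assumes \<mu>: "\<mu> \<in> FX0" "irreducible_over q \<mu>" "odd (degree \<mu>)"
    and \<alpha>: "\<alpha> \<in> Fq q" "\<alpha> \<noteq> 0" and neg_eq_star: "mu_neg \<mu> = mu_star \<alpha> \<mu>"
  shows "\<exists>b\<in>Fq q. - \<alpha> = b ^ 2"
proof -
  have fin: "finite (roots \<mu>)" using \<mu>(1) by (intro finite_roots FX0_nonzero)
  obtain z where z: "z \<in> roots \<mu>" using irreducible_obtain_root[OF \<mu>(2)] .
  have "z \<noteq> 0" using FX0_root_nonzero[OF \<mu>(1) z] .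
  have "- z \<in> roots (mu_neg \<mu>)" using z by (simp add: roots_mu_neg[OF fin])
  then have "- z \<in> (\<lambda>w. \<alpha> / w) ` roots \<mu>" by (simp only: neg_eq_star roots_mu_star[OF fin])
  then obtain w where w: "w \<in> roots \<mu>" "- z = \<alpha> / w" by blast
  have "w \<noteq> 0" using FX0_root_nonzero[OF \<mu>(1) w(1)] .
  then have "- (w * z) = \<alpha>" using w(2) by (simp add: field_simps)
  then have "w = - \<alpha> / z" using \<open>z \<noteq> 0\<close> by (auto simp: field_simps)
  then have "- \<alpha> / z \<in> roots \<mu>" using w(1) by simp
  then obtain k where k: "k < degree \<mu>" "- \<alpha> / z = z ^ (q ^ k)" "degree \<mu> dvd 2 * k"
    using irreducible_quotient_root_exponent[OF \<mu>(1,2) z Fq_uminus[OF \<alpha>(1)]] \<alpha>(2) by auto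
  have "degree \<mu> dvd k" using k(3) \<mu>(3) by (simp add: coprime_dvd_mult_right_iff)
  then have "k = 0" using k(1) nat_dvd_not_less by blast
  then have sq: "- \<alpha> = z ^ 2" using k(2) \<open>z \<noteq> 0\<close> by (simp add: field_simps power2_eq_square)
  then have "z ^ 2 \<in> Fq q" using Fq_uminus[OF \<alpha>(1)] by simp
  then have "z \<in> Fq q"
    using irreducible_root_square_in_Fq[OF \<mu>(1,2) z] \<mu>(3) by auto
  then show ?thesis using sq by blast
qed

lemma irreducible_self_reciprocal_cases:
  fixes \<mu> :: "'a poly"
  assumes \<mu>: "\<mu> \<in> FX0" "irreducible_over q \<mu>" and \<alpha>: "\<alpha> \<in> Fq q" "\<alpha> \<noteq> 0"
    and self: "\<mu> = mu_star \<alpha> \<mu>" and "n \<ge> 1"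
  shows "(\<exists>z\<in>Fq q. \<alpha> = z ^ 2 \<and> \<mu> = [:- z, 1:] \<and> mu_neg \<mu> = [:z, 1:])
     \<or> (\<exists>z\<in>Fq (q ^ 2) - Fq q. \<alpha> = z ^ 2 \<and> \<mu> = [:- \<alpha>, 0, 1:] \<and> mu_neg \<mu> = \<mu>)
     \<or> (\<exists>z\<in>Fq (q ^ 2) - Fq q. \<alpha> = - (z ^ 2) \<and> \<mu> = [:\<alpha>, 0, 1:] \<and> mu_neg \<mu> = \<mu>)
     \<or> ((\<forall>z\<in>roots \<mu>. \<alpha> \<noteq> z ^ 2 \<and> \<alpha> \<noteq> - (z ^ 2)) \<and>
        (\<exists>e. degree \<mu> = 2 * e \<and> (\<forall>z\<in>roots \<mu>. z ^ (q ^ e) = \<alpha> / z)) \<and>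
        (odd q \<longrightarrow> \<mu> \<noteq> mu_neg \<mu>))"
proof -
  note closed = self_reciprocal_div_root[OF \<mu>(1) self]
  consider (square) w where "w \<in> roots \<mu>" "\<alpha> = w ^ 2"
    | (neg_square) w where "w \<in> roots \<mu>" "\<alpha> = - (w ^ 2)"
    | (neither) "\<forall>z\<in>roots \<mu>. \<alpha> \<noteq> z ^ 2 \<and> \<alpha> \<noteq> - (z ^ 2)"
    by blast
  then show ?thesis
  proof cases
    case square
    then have "w ^ 2 \<in> Fq q" using \<alpha>(1) by simp
    then show ?thesis
      using irreducible_root_square_in_Fq[OF \<mu> square(1)] square(2) by auto
  next
    case neg_square
    then have "w ^ 2 \<in> Fq q" using Fq_uminus[OF \<alpha>(1)] by simp
    then consider (linear) "roots \<mu> = {w}" "w \<in> Fq q" "\<mu> = [:- w, 1:]" "mu_neg \<mu> = [:w, 1:]"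
      | (quadratic) "w \<in> Fq (q ^ 2) - Fq q" "\<mu> = [:- (w ^ 2), 0, 1:]" "mu_neg \<mu> = \<mu>"
      using irreducible_root_square_in_Fq[OF \<mu> neg_square(1)] by blast
    then show ?thesis
    proof cases
      case linear
      \<comment> \<open>the only root is its own reciprocal, so \<open>\<alpha> = w\<^sup>2\<close> after all\<close>
      then have "\<alpha> / w = w" using closed[OF neg_square(1)] by simp
      then have "\<alpha> = w ^ 2"
        using FX0_root_nonzero[OF \<mu>(1) neg_square(1)] by (simp add: field_simps power2_eq_square)
      then show ?thesis using linear by blast
    next
      case quadratic
      then show ?thesis using neg_square(2) by auto
    qed
  next
    case neither
    then have "\<And>w. w \<in> roots \<mu> \<Longrightarrow> \<alpha> \<noteq> w ^ 2" by blast
    note half = irreducible_self_reciprocal_half_degree[OF \<mu> \<alpha> closed this]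
    have "odd q \<longrightarrow> \<mu> \<noteq> mu_neg \<mu>"
      using irreducible_self_reciprocal_ne_mu_neg[OF \<mu> \<alpha> closed] neither
        even_q_iff_CHAR_2[OF \<open>n \<ge> 1\<close>] by blast
    moreover have "\<exists>e. degree \<mu> = 2 * e \<and> (\<forall>z\<in>roots \<mu>. z ^ (q ^ e) = \<alpha> / z)"
      using half by (intro exI[of _ "degree \<mu> div 2"]) auto
    ultimately show ?thesis using neither by blast
  qed
qed

end

end

theorem lemma4p1:
  fixes \<mu> :: "'a::field poly" and \<alpha> :: 'a and p q n d :: nat
  assumes F: "alg_closure_of_Fp TYPE('a) p"
    and q: "q = p ^ n" and n: "n \<ge> 1"
    and \<alpha>: "\<alpha> \<in> Fq q" "\<alpha> \<noteq> 0"
    and \<mu>: "poly_over q \<mu>" "\<mu> \<in> FX0"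
    and d: "d = degree \<mu>"
  shows
    "(\<mu> = mu_star \<alpha> \<mu> \<and> (\<forall>z\<in>roots \<mu>. z ^ 2 \<noteq> \<alpha>) \<longrightarrow>
        (\<exists>e. d = 2 * e \<and> (\<Prod>z\<in>roots \<mu>. z) = \<alpha> ^ e))
     \<and>
     (\<mu> = mu_star \<alpha> \<mu> \<and> irreducible_over q \<mu> \<longrightarrow>
        (
         (\<exists>z\<in>Fq q. \<alpha> = z ^ 2 \<and> \<mu> = [:- z, 1:] \<and> mu_neg \<mu> = [:z, 1:])
         \<or>
         (\<exists>z\<in>Fq (q ^ 2) - Fq q. \<alpha> = z ^ 2 \<and> \<mu> = [:- \<alpha>, 0, 1:] \<and> mu_neg \<mu> = \<mu>)
         \<or>
         (\<exists>z\<in>Fq (q ^ 2) - Fq q. \<alpha> = - (z ^ 2) \<and> \<mu> = [:\<alpha>, 0, 1:] \<and> mu_neg \<mu> = \<mu>)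
         \<or>
         ((\<forall>z\<in>roots \<mu>. \<alpha> \<noteq> z ^ 2 \<and> \<alpha> \<noteq> - (z ^ 2)) \<and>
          (\<exists>e. d = 2 * e \<and> (\<forall>z\<in>roots \<mu>. z ^ (q ^ e) = \<alpha> / z)) \<and>
          (odd q \<longrightarrow> \<mu> \<noteq> mu_neg \<mu>))
        )
        \<and>
        ((\<exists>z\<in>Fq (q ^ 2) - Fq q. \<alpha> = z ^ 2 \<and> \<mu> = [:- \<alpha>, 0, 1:] \<and> mu_neg \<mu> = \<mu>)
         \<or> (\<exists>z\<in>Fq (q ^ 2) - Fq q. \<alpha> = - (z ^ 2) \<and> \<mu> = [:\<alpha>, 0, 1:] \<and> mu_neg \<mu> = \<mu>)
         \<longrightarrow> odd q))
     \<and>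
     (irreducible_over q \<mu> \<and> odd d \<and> odd q \<and> mu_neg \<mu> = mu_star \<alpha> \<mu> \<longrightarrow>
        (\<exists>b\<in>Fq q. - \<alpha> = b ^ 2))"
proof -
  have prime: "prime CHAR('a)" and q_eq: "q = CHAR('a) ^ n"
    and alg_closed: "\<And>g :: 'a poly. degree g > 0 \<Longrightarrow> \<exists>x. poly g x = 0"
    using F q by (auto simp: alg_closure_of_Fp_def)
  note neg_\<alpha> = Fq_uminus[OF prime q_eq \<alpha>(1)]
  have sqrt_odd: "odd q" if "z \<in> Fq (q ^ 2) - Fq q" "\<alpha> = z ^ 2 \<or> \<alpha> = - (z ^ 2)" for z :: 'a
    using odd_q_if_sqrt_not_in_Fq[OF prime q_eq n, of z] that \<alpha>(1) neg_\<alpha> by auto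
  show ?thesis
    unfolding d
    using self_reciprocal_prod_roots[OF alg_closed \<mu>(2), of \<alpha>]
      irreducible_self_reciprocal_cases[OF prime q_eq alg_closed \<mu>(2) _ \<alpha> _ n]
      mu_neg_eq_mu_star_odd_degree_square[OF prime q_eq alg_closed \<mu>(2) _ _ \<alpha>]
      sqrt_odd
    by blast
qed

end
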